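(* Let $t\in(0,1)$ and $\gamma>0$, and let $v_\gamma(z)=(1-|z|)^\gamma$ for $z\in\mathbb{D}$. (i) If $\gamma\ge1$, then $\|C_t\|_{H^\infty_{v_\gamma}\to H^\infty_{v_\gamma}}=1$. (ii) If $\gamma\in(0,1)$, then $\|C_t\|_{H^\infty_{v_\gamma}\to H^\infty_{v_\gamma}}\le\min\{-\frac{\log(1-t)}{t},\frac{1}{\gamma}\}$.
   Context: $\mathbb{D}=\{z\in\mathbb{C}:|z|<1\}$ and $H(\mathbb{D})$ is the space of holomorphic functions on $\mathbb{D}$. For a weight $v$ (continuous non-increasing $v\colon[0,1)\to(0,\infty)$, with $v(z):=v(|z|)$), $H^\infty_v=\{f\in H(\mathbb{D}):\|f\|_{\infty,v}:=\sup_{z\in\mathbb{D}}|f(z)|v(z)<\infty\}$ with norm $\|\cdot\|_{\infty,v}$. For $t\in[0,1]$ the generalized Cesàro operator $C_t$ is defined on $f\in H(\mathbb{D})$ by $C_tf(0)=f(0)$ and $C_tf(z)=\frac{1}{z}\int_0^z\frac{f(\xi)}{1-t\xi}\,d\xi$ for $z\in\mathbb{D}\setminus\{0\}$. *)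

theory Defs
  imports "HOL-Complex_Analysis.Complex_Analysis"
begin

text \<open>Weighted sup-norm (with values in the extended reals, so that it is
  \<infinity> for functions outside H^\<infinity>_v). A weight is a function on [0,1),
  extended radially: v(z) := v(|z|).\<close>
definition wnorm :: "(real \<Rightarrow> real) \<Rightarrow> (complex \<Rightarrow> complex) \<Rightarrow> ereal" where
  "wnorm v f = (SUP z\<in>ball 0 1. ereal (norm (f z) * v (norm z)))"

definition Hinf_v :: "(real \<Rightarrow> real) \<Rightarrow> (complex \<Rightarrow> complex) set" where
  "Hinf_v v = {f. f holomorphic_on ball 0 1 \<and> wnorm v f < \<infinity>}"

definition cesaro :: "real \<Rightarrow> (complex \<Rightarrow> complex) \<Rightarrow> complex \<Rightarrow> complex" where
  "cesaro t f z = (if z = 0 then f 0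
     else (1 / z) * contour_integral (linepath 0 z) (\<lambda>\<xi>. f \<xi> / (1 - of_real t * \<xi>)))"

definition opnorm_v :: "(real \<Rightarrow> real) \<Rightarrow> ((complex \<Rightarrow> complex) \<Rightarrow> (complex \<Rightarrow> complex)) \<Rightarrow> ereal" where
  "opnorm_v v T = (SUP f\<in>{f \<in> Hinf_v v. wnorm v f \<le> 1}. wnorm v (T f))"

definition v_gamma :: "real \<Rightarrow> real \<Rightarrow> real" where
  "v_gamma \<gamma> r = (1 - r) powr \<gamma>"

end

(*
  For |z| = r the substitution xi = s z gives C_t f(z) = int_0^1 f(sz) / (1 - tsz) ds, and
  |f(sz)| <= ||f|| (1 - sr)^(-gamma). Bounding (1 - sr)^gamma below by (1 - r)^gamma and
  |1 - tsz| by 1 - ts produces the factor -log(1 - t)/t. Bounding |1 - tsz| by 1 - sr instead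
  leaves a majorant with an explicit antiderivative, and the resulting factor
  (1 - (1 - r)^gamma)/(gamma r) is at most max {1, 1/gamma} by Bernoulli's inequality.
  The constant function 1 has norm at most 1 and C_t 1 (0) = 1, so the norm of C_t is at least 1.
*)
theory Submission
  imports Defs
begin

lemma norm_integral_le_antiderivative:
  fixes h :: "real \<Rightarrow> 'a::banach" and d \<phi> :: "real \<Rightarrow> real"
  assumes "(h has_integral I) {a..b}" and "a \<le> b"
    and "\<And>s. s \<in> {a..b} \<Longrightarrow> norm (h s) \<le> d s"
    and "\<And>s. s \<in> {a..b} \<Longrightarrow> (\<phi> has_real_derivative d s) (at s within {a..b})"
  shows "norm I \<le> \<phi> b - \<phi> a"
proof -
  have d: "(d has_integral (\<phi> b - \<phi> a)) {a..b}"
    using assms(2,4)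
    by (intro fundamental_theorem_of_calculus) (auto simp flip: has_real_derivative_iff_has_vector_derivative)
  have "norm (integral {a..b} h) \<le> integral {a..b} d"
    using assms(1,3) d by (intro integral_norm_bound_integral) auto
  then show ?thesis
    using assms(1) d by (simp add: integral_unique)
qed

lemma one_minus_powr_le:
  fixes r \<gamma> :: real
  assumes "0 \<le> r" "r < 1" "0 < \<gamma>"
  shows "1 - (1 - r) powr \<gamma> \<le> max 1 \<gamma> * r"
proof (cases "1 \<le> \<gamma>")
  case True
  let ?g = "\<lambda>x. x powr \<gamma> - \<gamma> * x"
  have "?g 1 \<le> ?g (1 - r)"
  proof (rule DERIV_nonpos_imp_nonincreasing[of "1 - r" 1 ?g])
    show "1 - r \<le> 1" using assms by simp
  next
    fix x assume x: "1 - r \<le> x" "x \<le> 1"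
    then have "0 < x" using assms by linarith
    then have "(?g has_real_derivative \<gamma> * x powr (\<gamma> - 1) - \<gamma>) (at x)"
      by (auto intro!: derivative_eq_intros)
    moreover have "\<gamma> * x powr (\<gamma> - 1) \<le> \<gamma> * 1"
      using \<open>0 < x\<close> x True by (intro mult_left_mono powr_le1) auto
    ultimately show "\<exists>y. (?g has_real_derivative y) (at x) \<and> y \<le> 0"
      by auto
  qed
  then show ?thesis using True by (simp add: algebra_simps)
next
  case False
  have "(1 - r) powr 1 \<le> (1 - r) powr \<gamma>"
    using False assms by (intro powr_mono') auto
  then show ?thesis using False assms by simp
qed

lemma norm_one_minus_mult_ge:
  fixes t :: real and \<xi> :: complex
  shows "1 - \<bar>t\<bar> * norm \<xi> \<le> norm (1 - of_real t * \<xi>)"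
  using norm_triangle_ineq2[of 1 "of_real t * \<xi>"] by (simp add: norm_mult)

lemma cesaro_kernel_holomorphic:
  fixes f :: "complex \<Rightarrow> complex"
  assumes "f holomorphic_on ball 0 1" and "\<bar>t\<bar> \<le> 1"
  shows "(\<lambda>\<xi>. f \<xi> / (1 - of_real t * \<xi>)) holomorphic_on ball 0 1"
proof -
  have "1 - of_real t * \<xi> \<noteq> 0" if "\<xi> \<in> ball 0 1" for \<xi> :: complex
  proof -
    have "\<bar>t\<bar> * norm \<xi> \<le> norm \<xi>"
      using assms(2) by (simp add: mult_left_le_one_le)
    then have "\<bar>t\<bar> * norm \<xi> < 1"
      using that by simp
    then show ?thesis using norm_one_minus_mult_ge[of t \<xi>] by auto
  qed
  then show ?thesis using assms(1) by (auto intro!: holomorphic_intros)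
qed

lemma segment_0_subset_unit_ball:
  "z \<in> ball 0 1 \<Longrightarrow> path_image (linepath 0 z) \<subseteq> ball 0 1"
  by (simp add: path_image_linepath closed_segment_subset)

lemma cesaro_has_integral:
  assumes "f holomorphic_on ball 0 1" and "\<bar>t\<bar> \<le> 1" and "z \<in> ball 0 1"
  shows "((\<lambda>s. f (of_real s * z) / (1 - of_real t * (of_real s * z))) has_integral cesaro t f z) {0..1}"
proof (cases "z = 0")
  case True
  then show ?thesis
    using has_integral_const_real[of "f 0" 0 1] by (simp add: cesaro_def)
next
  case False
  let ?g = "\<lambda>\<xi>. f \<xi> / (1 - of_real t * \<xi>)"
  have "?g contour_integrable_on linepath 0 z"
    using cesaro_kernel_holomorphic[OF assms(1,2)] segment_0_subset_unit_ball[OF assms(3)]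
    by (intro contour_integrable_holomorphic_simple) auto
  then have "((\<lambda>s. ?g (linepath 0 z s) * z) has_integral contour_integral (linepath 0 z) ?g) {0..1}"
    using has_contour_integral_integral has_contour_integral_linepath by fastforce
  from has_integral_divide[OF this, of z] show ?thesis
    using False by (simp add: cesaro_def linepath_def scaleR_conv_of_real)
qed

lemma cesaro_holomorphic:
  assumes "f holomorphic_on ball 0 1" and "\<bar>t\<bar> \<le> 1"
  shows "cesaro t f holomorphic_on ball 0 1"
proof -
  let ?g = "\<lambda>\<xi>. f \<xi> / (1 - of_real t * \<xi>)"
  obtain G where G: "\<And>x. x \<in> ball 0 1 \<Longrightarrow> (G has_field_derivative ?g x) (at x)"
    using holomorphic_convex_primitive'[OF convex_ball open_ball cesaro_kernel_holomorphic[OF assms]]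
    by (metis at_within_open open_ball)
  have "G holomorphic_on ball 0 1"
    using G holomorphic_on_open by blast
  \<comment> \<open>C_t f is the difference quotient of G at 0, whose removable singularity is filled by f 0 = G' 0\<close>
  then have "(\<lambda>z. if z = 0 then deriv G 0 else (G z - G 0) / (z - 0)) holomorphic_on ball 0 1"
    by (intro pole_lemma) auto
  moreover have "(if z = 0 then deriv G 0 else (G z - G 0) / (z - 0)) = cesaro t f z"
    if "z \<in> ball 0 1" for z
  proof -
    have "(?g has_contour_integral (G z - G 0)) (linepath 0 z)"
      using contour_integral_primitive[OF _ valid_path_linepath segment_0_subset_unit_ball[OF that]]
        G has_field_derivative_at_within by fastforce
    then show ?thesis
      using DERIV_imp_deriv[OF G[of 0]] by (simp add: cesaro_def contour_integral_unique)
  qed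
  ultimately show ?thesis by (rule holomorphic_transform)
qed

lemma weighted_bound_nonneg:
  assumes "\<And>w. w \<in> ball 0 1 \<Longrightarrow> norm (f w) * v_gamma \<gamma> (norm w) \<le> M"
  shows "0 \<le> M"
  using assms[of 0] by (simp add: v_gamma_def) (meson norm_ge_zero order_trans)

lemma norm_cesaro_integrand_le:
  fixes f :: "complex \<Rightarrow> complex"
  assumes f_bound: "\<And>w. w \<in> ball 0 1 \<Longrightarrow> norm (f w) * v_gamma \<gamma> (norm w) \<le> M"
    and "\<bar>t\<bar> \<le> 1" and "z \<in> ball 0 1" and "s \<in> {0..1}"
  shows "norm (f (of_real s * z) / (1 - of_real t * (of_real s * z)))
           \<le> M / ((1 - s * norm z) powr \<gamma> * (1 - \<bar>t\<bar> * (s * norm z)))"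
proof -
  let ?w = "of_real s * z"
  have w: "norm ?w = s * norm z"
    using assms(4) by (simp add: norm_mult)
  have "s * norm z \<le> norm z"
    using assms(4) by (simp add: mult_left_le_one_le)
  then have "s * norm z < 1"
    using assms(3) by simp
  moreover have "\<bar>t\<bar> * (s * norm z) \<le> s * norm z"
    using assms(2,4) by (simp add: mult_left_le_one_le)
  ultimately have pos: "0 < (1 - s * norm z) powr \<gamma>" "0 < 1 - \<bar>t\<bar> * (s * norm z)"
    by auto
  have "0 \<le> M"
    using f_bound by (rule weighted_bound_nonneg)
  have "norm (f ?w) \<le> M / (1 - s * norm z) powr \<gamma>"
    using f_bound[of ?w] w \<open>s * norm z < 1\<close> pos(1) by (simp add: v_gamma_def field_simps)
  moreover have "1 - \<bar>t\<bar> * (s * norm z) \<le> norm (1 - of_real t * ?w)"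
    using norm_one_minus_mult_ge[of t ?w] w by simp
  ultimately have "norm (f ?w) / norm (1 - of_real t * ?w)
                     \<le> M / (1 - s * norm z) powr \<gamma> / (1 - \<bar>t\<bar> * (s * norm z))"
    using pos \<open>0 \<le> M\<close> by (intro frac_le) auto
  then show ?thesis
    by (simp add: norm_divide)
qed

lemma norm_cesaro_weighted_le_log:
  assumes "f holomorphic_on ball 0 1"
    and f_bound: "\<And>w. w \<in> ball 0 1 \<Longrightarrow> norm (f w) * v_gamma \<gamma> (norm w) \<le> M"
    and "0 < t" "t < 1" "0 \<le> \<gamma>" "z \<in> ball 0 1"
  shows "norm (cesaro t f z) * v_gamma \<gamma> (norm z) \<le> M * (- ln (1 - t) / t)"
proof -
  define r where "r = norm z"
  have r: "0 \<le> r" "r < 1"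
    using assms(6) by (auto simp: r_def)
  have "0 \<le> M"
    using f_bound by (rule weighted_bound_nonneg)
  define C where "C = M / (1 - r) powr \<gamma>"
  have "norm (f (of_real s * z) / (1 - of_real t * (of_real s * z))) \<le> C / (1 - t * s)"
    if s: "s \<in> {0..1}" for s
  proof -
    have "s * r \<le> r" "t * s \<le> t" "t * (s * r) \<le> t * s"
      using s r assms(3,4) by (auto simp: mult_left_le_one_le mult_right_le_one_le)
    then have "M / ((1 - s * r) powr \<gamma> * (1 - t * (s * r))) \<le> M / ((1 - r) powr \<gamma> * (1 - t * s))"
      using r assms(4,5) \<open>0 \<le> M\<close> by (intro divide_left_mono mult_mono powr_mono2 mult_pos_pos) auto
    then show ?thesis
      using norm_cesaro_integrand_le[OF f_bound _ assms(6) s, of t] assms(3,4)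
      by (simp add: C_def r_def)
  qed
  moreover define \<phi> where "\<phi> = (\<lambda>s. - C / t * ln (1 - t * s))"
  have "(\<phi> has_real_derivative C / (1 - t * s)) (at s within {0..1})"
    if "s \<in> {0..1}" for s
  proof -
    have "t * s \<le> t"
      using that assms(3) by (simp add: mult_right_le_one_le)
    then have "t * s < 1"
      using assms(4) by simp
    then have "(\<phi> has_real_derivative C / (1 - t * s)) (at s)"
      unfolding \<phi>_def using assms(3) by (auto intro!: derivative_eq_intros)
    then show ?thesis
      by (rule has_field_derivative_at_within)
  qed
  ultimately have "norm (cesaro t f z) \<le> \<phi> 1 - \<phi> 0"
    using cesaro_has_integral[OF assms(1) _ assms(6), of t] assms(3,4)
    by (intro norm_integral_le_antiderivative[where d = "\<lambda>s. C / (1 - t * s)"]) auto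
  then have "norm (cesaro t f z) * (1 - r) powr \<gamma> \<le> C * (- ln (1 - t) / t) * (1 - r) powr \<gamma>"
    by (intro mult_right_mono) (auto simp: \<phi>_def)
  also have "\<dots> = M * (- ln (1 - t) / t)"
    using r by (simp add: C_def)
  finally show ?thesis
    by (simp add: v_gamma_def r_def)
qed

lemma norm_cesaro_weighted_le_max:
  assumes "f holomorphic_on ball 0 1"
    and f_bound: "\<And>w. w \<in> ball 0 1 \<Longrightarrow> norm (f w) * v_gamma \<gamma> (norm w) \<le> M"
    and "\<bar>t\<bar> \<le> 1" "0 < \<gamma>" "z \<in> ball 0 1"
  shows "norm (cesaro t f z) * v_gamma \<gamma> (norm z) \<le> M * max 1 (1 / \<gamma>)"
proof (cases "z = 0")
  case True
  have "M \<le> M * max 1 (1 / \<gamma>)"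
    using weighted_bound_nonneg[OF f_bound] by (simp add: mult_le_cancel_left1)
  then show ?thesis
    using True f_bound[of 0] by (simp add: cesaro_def v_gamma_def)
next
  case False
  define r where "r = norm z"
  have r: "0 < r" "r < 1"
    using assms(5) False by (auto simp: r_def)
  have "0 \<le> M"
    using f_bound by (rule weighted_bound_nonneg)
  have "norm (f (of_real s * z) / (1 - of_real t * (of_real s * z))) \<le> M / (1 - s * r) powr (\<gamma> + 1)"
    if s: "s \<in> {0..1}" for s
  proof -
    have "s * r \<le> r" "\<bar>t\<bar> * (s * r) \<le> s * r"
      using s r assms(3) by (auto simp: mult_left_le_one_le)
    moreover have "s * r < 1"
      using \<open>s * r \<le> r\<close> r by linarith
    ultimately have "M / ((1 - s * r) powr \<gamma> * (1 - \<bar>t\<bar> * (s * r))) \<le> M / ((1 - s * r) powr \<gamma> * (1 - s * r))"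
      using \<open>0 \<le> M\<close> by (intro divide_left_mono mult_left_mono mult_pos_pos) auto
    also have "\<dots> = M / (1 - s * r) powr (\<gamma> + 1)"
      using \<open>s * r < 1\<close> by (simp add: powr_add)
    finally show ?thesis
      using norm_cesaro_integrand_le[OF f_bound assms(3,5) s] by (simp add: r_def)
  qed
  moreover define \<phi> where "\<phi> = (\<lambda>s. M / (\<gamma> * r) / (1 - s * r) powr \<gamma>)"
  have "(\<phi> has_real_derivative M / (1 - s * r) powr (\<gamma> + 1)) (at s within {0..1})"
    if "s \<in> {0..1}" for s
  proof -
    have "s * r \<le> r"
      using that r by (simp add: mult_left_le_one_le)
    then have "s * r < 1"
      using r by linarith
    moreover have powr_pred: "(1 - r * s) powr (\<gamma> - 1) = (1 - r * s) powr \<gamma> / (1 - r * s)"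
      using \<open>s * r < 1\<close> by (simp add: powr_diff mult.commute)
    ultimately have "(\<phi> has_real_derivative M / (1 - s * r) powr (\<gamma> + 1)) (at s)"
      unfolding \<phi>_def using r assms(4)
      by (auto intro!: derivative_eq_intros simp: powr_pred powr_add field_simps)
    then show ?thesis
      by (rule has_field_derivative_at_within)
  qed
  ultimately have "norm (cesaro t f z) \<le> \<phi> 1 - \<phi> 0"
    using cesaro_has_integral[OF assms(1,3,5)]
    by (intro norm_integral_le_antiderivative[where d = "\<lambda>s. M / (1 - s * r) powr (\<gamma> + 1)"]) auto
  then have "norm (cesaro t f z) * (1 - r) powr \<gamma> \<le> (\<phi> 1 - \<phi> 0) * (1 - r) powr \<gamma>"
    by (rule mult_right_mono) simp
  also have "\<dots> = M / (\<gamma> * r) * (1 - (1 - r) powr \<gamma>)"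
    using r assms(4) by (simp add: \<phi>_def field_simps)
  also have "\<dots> \<le> M / (\<gamma> * r) * (max 1 \<gamma> * r)"
    using r assms(4) \<open>0 \<le> M\<close> one_minus_powr_le[of r \<gamma>] by (intro mult_left_mono) auto
  also have "\<dots> = M * max 1 (1 / \<gamma>)"
    using r assms(4) by (auto simp: max_def field_simps)
  finally show ?thesis
    by (simp add: v_gamma_def r_def)
qed

lemma wnorm_le_ereal_iff:
  "wnorm v f \<le> ereal M \<longleftrightarrow> (\<forall>z\<in>ball 0 1. norm (f z) * v (norm z) \<le> M)"
  by (simp add: wnorm_def SUP_le_iff)

lemma wnorm_cesaro_le_log:
  assumes "f holomorphic_on ball 0 1" and "wnorm (v_gamma \<gamma>) f \<le> ereal M"
    and "0 < t" "t < 1" "0 \<le> \<gamma>"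
  shows "wnorm (v_gamma \<gamma>) (cesaro t f) \<le> ereal (M * (- ln (1 - t) / t))"
  using assms norm_cesaro_weighted_le_log[OF assms(1)] by (simp add: wnorm_le_ereal_iff)

lemma wnorm_cesaro_le_max:
  assumes "f holomorphic_on ball 0 1" and "wnorm (v_gamma \<gamma>) f \<le> ereal M"
    and "\<bar>t\<bar> \<le> 1" "0 < \<gamma>"
  shows "wnorm (v_gamma \<gamma>) (cesaro t f) \<le> ereal (M * max 1 (1 / \<gamma>))"
  using assms norm_cesaro_weighted_le_max[OF assms(1)] by (simp add: wnorm_le_ereal_iff)

lemma cesaro_in_Hinf_v:
  assumes "f \<in> Hinf_v (v_gamma \<gamma>)" and "\<bar>t\<bar> \<le> 1" "0 < \<gamma>"
  shows "cesaro t f \<in> Hinf_v (v_gamma \<gamma>)"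
proof -
  have f: "f holomorphic_on ball 0 1" "wnorm (v_gamma \<gamma>) f < \<infinity>"
    using assms(1) by (auto simp: Hinf_v_def)
  then obtain M where "wnorm (v_gamma \<gamma>) f \<le> ereal M"
    by (cases "wnorm (v_gamma \<gamma>) f") auto
  from wnorm_cesaro_le_max[OF f(1) this assms(2,3)]
  have "wnorm (v_gamma \<gamma>) (cesaro t f) < \<infinity>"
    by (rule order.strict_trans1) simp
  then show ?thesis
    using cesaro_holomorphic[OF f(1) assms(2)] by (simp add: Hinf_v_def)
qed

lemma opnorm_cesaro_le_log:
  assumes "0 < t" "t < 1" "0 \<le> \<gamma>"
  shows "opnorm_v (v_gamma \<gamma>) (cesaro t) \<le> ereal (- ln (1 - t) / t)"
  using wnorm_cesaro_le_log[where M = 1, OF _ _ assms]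
  by (auto simp: opnorm_v_def Hinf_v_def one_ereal_def intro!: SUP_least)

lemma opnorm_cesaro_le_max:
  assumes "\<bar>t\<bar> \<le> 1" "0 < \<gamma>"
  shows "opnorm_v (v_gamma \<gamma>) (cesaro t) \<le> ereal (max 1 (1 / \<gamma>))"
  using wnorm_cesaro_le_max[where M = 1, OF _ _ assms]
  by (auto simp: opnorm_v_def Hinf_v_def one_ereal_def intro!: SUP_least)

lemma one_le_opnorm_cesaro:
  assumes "0 \<le> \<gamma>"
  shows "1 \<le> opnorm_v (v_gamma \<gamma>) (cesaro t)"
proof -
  let ?one = "\<lambda>z::complex. 1::complex"
  have "wnorm (v_gamma \<gamma>) ?one \<le> 1"
    using assms unfolding one_ereal_def wnorm_le_ereal_iff by (auto simp: v_gamma_def powr_le1)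
  then have "?one \<in> {f \<in> Hinf_v (v_gamma \<gamma>). wnorm (v_gamma \<gamma>) f \<le> 1}"
    by (auto simp: Hinf_v_def order.strict_trans1)
  moreover have "1 \<le> wnorm (v_gamma \<gamma>) (cesaro t ?one)"
    unfolding wnorm_def by (rule SUP_upper2[of 0]) (auto simp: cesaro_def v_gamma_def)
  ultimately show ?thesis
    unfolding opnorm_v_def by (blast intro: SUP_upper2)
qed

theorem proposition2p9:
  fixes t \<gamma> :: real
  assumes "0 < t" "t < 1" "0 < \<gamma>"
  shows "(1 \<le> \<gamma> \<longrightarrow>
            (\<forall>f\<in>Hinf_v (v_gamma \<gamma>). cesaro t f \<in> Hinf_v (v_gamma \<gamma>)) \<and>
            opnorm_v (v_gamma \<gamma>) (cesaro t) = 1)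
       \<and> (\<gamma> < 1 \<longrightarrow>
            (\<forall>f\<in>Hinf_v (v_gamma \<gamma>). cesaro t f \<in> Hinf_v (v_gamma \<gamma>)) \<and>
            opnorm_v (v_gamma \<gamma>) (cesaro t) \<le> ereal (min (- ln (1 - t) / t) (1 / \<gamma>)))"
proof -
  have t: "\<bar>t\<bar> \<le> 1"
    using assms(1,2) by simp
  have "\<forall>f\<in>Hinf_v (v_gamma \<gamma>). cesaro t f \<in> Hinf_v (v_gamma \<gamma>)"
    using cesaro_in_Hinf_v t assms(3) by blast
  moreover have "opnorm_v (v_gamma \<gamma>) (cesaro t) = 1" if "1 \<le> \<gamma>"
  proof -
    have "max 1 (1 / \<gamma>) = 1"
      using that by (simp add: max_def)
    then show ?thesis
      using opnorm_cesaro_le_max[OF t assms(3)] one_le_opnorm_cesaro[of \<gamma> t] assms(3)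
      by (simp add: one_ereal_def order_antisym)
  qed
  moreover have "opnorm_v (v_gamma \<gamma>) (cesaro t) \<le> ereal (min (- ln (1 - t) / t) (1 / \<gamma>))"
    if "\<gamma> < 1"
    using opnorm_cesaro_le_log[OF assms(1,2)] opnorm_cesaro_le_max[OF t assms(3)] that assms(3)
    by (simp add: max_def)
  ultimately show ?thesis
    by blast
qed

end
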